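(* If $U$ and $V$ are nonempty open subsets of $\Omega$, then there exists $N\in\mathbb Z^+$ such that $U\cap T^nV\neq\emptyset$ (equivalently $T^{-n}U\cap V\ne\emptyset$) for all $n\ge N$.
   Context: Let $I=[0,1)$ with its usual metric $d_I$, fix $\theta\in(0,1)$, and let $\Omega=I^{\mathbb Z}$ with metric $d(x,y)=\sup_{k\in\mathbb Z}\theta^{|k|}d_I(x_k,y_k)$. Let $\tau:I\to I$ have full branches, so that $b=\#\tau^{-1}(t)$ is constant. Assume there is $\eta\in(0,1)$ such that every inverse branch $\zeta$ of $\tau$ satisfies $d_I(\zeta(s),\zeta(t))\le\eta\,d_I(s,t)$. Let $(\bar\tau x)_i=\tau(x_i)$ and let $\sigma$ be the shift $(\sigma x)_i=x_{i+1}$. Let $E:\Omega\to\Omega$ be invertible and suppose there is $C_E\in(0,\eta^{-1})$ with $d(\sigma^nE^{-1}x,\sigma^nE^{-1}y)\le C_E\,d(\sigma^nx,\sigma^ny)$ for all $n\in\mathbb Z$ and $x,y\in\Omega$. The coupled map is $T=E\circ\bar\tau$. *)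

theory Defs
  imports "HOL-Analysis.Analysis"
begin

definition Iset :: "real set" where
  "Iset = {0..<1}"

definition Omega :: "(int \<Rightarrow> real) set" where
  "Omega = {x. \<forall>k. x k \<in> Iset}"

definition dOm :: "real \<Rightarrow> (int \<Rightarrow> real) \<Rightarrow> (int \<Rightarrow> real) \<Rightarrow> real" where
  "dOm \<theta> x y = (SUP k. \<theta> ^ nat \<bar>k\<bar> * \<bar>x k - y k\<bar>)"

definition openOm :: "real \<Rightarrow> (int \<Rightarrow> real) set \<Rightarrow> bool" where
  "openOm \<theta> U \<longleftrightarrow> U \<subseteq> Omega \<and>
     (\<forall>x\<in>U. \<exists>e>0. \<forall>y\<in>Omega. dOm \<theta> x y < e \<longrightarrow> y \<in> U)"

definition shiftn :: "int \<Rightarrow> (int \<Rightarrow> real) \<Rightarrow> (int \<Rightarrow> real)" where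
  "shiftn n x = (\<lambda>i. x (i + n))"

definition taubar :: "(real \<Rightarrow> real) \<Rightarrow> (int \<Rightarrow> real) \<Rightarrow> (int \<Rightarrow> real)" where
  "taubar \<tau> x = (\<lambda>i. \<tau> (x i))"

definition full_branches :: "(real \<Rightarrow> real) \<Rightarrow> nat \<Rightarrow> (nat \<Rightarrow> real \<Rightarrow> real) \<Rightarrow> bool" where
  "full_branches \<tau> b \<zeta> \<longleftrightarrow>
     \<tau> ` Iset \<subseteq> Iset \<and>
     (\<forall>t\<in>Iset. {s\<in>Iset. \<tau> s = t} = (\<lambda>j. \<zeta> j t) ` {..<b} \<and>
                inj_on (\<lambda>j. \<zeta> j t) {..<b} \<and>
                (\<forall>j<b. \<zeta> j t \<in> Iset \<and> \<tau> (\<zeta> j t) = t))"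

end

theory Submission
  imports Defs
begin

(* The map T is uniformly expanding: every w in Omega has a "local inverse"
   S_w with T (S_w z) = z and S_w (T w) = w, obtained by undoing E and then
   applying, coordinatewise, the inverse branch of tau through w_i.  Since the
   branches contract by eta and E^-1 expands by at most C_E, each S_w is a
   contraction with ratio lam = eta * C_E < 1.
   Composing n local inverses along the forward orbit of a point w shows that
   every point u of Omega has a T^n-preimage within lam^n * d(T^n w, u) of w
   (lemma backward_orbit, proved for an abstract map).  As Omega has diameter
   at most 1, every u has T^n-preimages within lam^n of any prescribed point.
   Given U, V nonempty open, pick u in U and a ball of radius e around v in V;
   once lam^n < e, a T^n-preimage of u lies in V, i.e. U meets T^n(V). *)

lemma dOm_term_le_1:
  assumes "x \<in> Omega" "y \<in> Omega" "0 \<le> \<theta>" "\<theta> \<le> 1"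
  shows "\<theta> ^ nat \<bar>k\<bar> * \<bar>x k - y k\<bar> \<le> 1"
proof -
  have weight: "\<theta> ^ nat \<bar>k\<bar> \<le> 1" using assms by (simp add: power_le_one)
  have "x k \<in> Iset" "y k \<in> Iset" using assms by (auto simp: Omega_def)
  then have dist: "\<bar>x k - y k\<bar> \<le> 1" by (auto simp: Iset_def)
  show ?thesis using mult_mono[OF weight dist] assms by simp
qed

lemma dOm_le_1:
  assumes "x \<in> Omega" "y \<in> Omega" "0 \<le> \<theta>" "\<theta> \<le> 1"
  shows "dOm \<theta> x y \<le> 1"
  unfolding dOm_def using dOm_term_le_1[OF assms] by (intro cSUP_least) auto

lemma dOm_coordinatewise_lipschitz:
  assumes "x \<in> Omega" "y \<in> Omega" "0 \<le> \<theta>" "\<theta> \<le> 1" "0 \<le> c"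
    and coord: "\<And>k. \<bar>a k - b k\<bar> \<le> c * \<bar>x k - y k\<bar>"
  shows "dOm \<theta> a b \<le> c * dOm \<theta> x y"
  unfolding dOm_def
proof (rule cSUP_least)
  fix k :: int
  have bdd: "bdd_above (range (\<lambda>k. \<theta> ^ nat \<bar>k\<bar> * \<bar>x k - y k\<bar>))"
    using dOm_term_le_1[OF assms(1-4)] by (intro bdd_aboveI[where M = 1]) auto
  have "\<theta> ^ nat \<bar>k\<bar> * \<bar>a k - b k\<bar> \<le> c * (\<theta> ^ nat \<bar>k\<bar> * \<bar>x k - y k\<bar>)"
    using mult_left_mono[OF coord[of k], of "\<theta> ^ nat \<bar>k\<bar>"] assms by (simp add: algebra_simps)
  also have "\<dots> \<le> c * (SUP k. \<theta> ^ nat \<bar>k\<bar> * \<bar>x k - y k\<bar>)"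
    using assms bdd by (intro mult_left_mono cSUP_upper) auto
  finally show "\<theta> ^ nat \<bar>k\<bar> * \<bar>a k - b k\<bar> \<le> c * (SUP k. \<theta> ^ nat \<bar>k\<bar> * \<bar>x k - y k\<bar>)" .
qed auto

lemma backward_orbit:
  fixes T :: "'a \<Rightarrow> 'a" and S :: "'a \<Rightarrow> 'a \<Rightarrow> 'a" and d :: "'a \<Rightarrow> 'a \<Rightarrow> real"
  assumes T_into: "\<And>w. w \<in> X \<Longrightarrow> T w \<in> X"
    and S_into: "\<And>w z. w \<in> X \<Longrightarrow> z \<in> X \<Longrightarrow> S w z \<in> X"
    and T_S: "\<And>w z. w \<in> X \<Longrightarrow> z \<in> X \<Longrightarrow> T (S w z) = z"
    and S_T: "\<And>w. w \<in> X \<Longrightarrow> S w (T w) = w"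
    and S_contr: "\<And>w z z'. w \<in> X \<Longrightarrow> z \<in> X \<Longrightarrow> z' \<in> X \<Longrightarrow>
                    d (S w z) (S w z') \<le> lam * d z z'"
    and lam: "0 \<le> lam"
    and u: "u \<in> X"
  shows "w \<in> X \<Longrightarrow> \<exists>x\<in>X. (T ^^ n) x = u \<and> d w x \<le> lam ^ n * d ((T ^^ n) w) u"
proof (induction n arbitrary: w)
  case 0
  then show ?case using u by auto
next
  case (Suc n)
  have shift: "(T ^^ Suc n) y = (T ^^ n) (T y)" for y by (metis comp_apply funpow_Suc_right)
  obtain x where x: "x \<in> X" "(T ^^ n) x = u" "d (T w) x \<le> lam ^ n * d ((T ^^ Suc n) w) u"
    using Suc.IH[OF T_into[OF Suc.prems]] unfolding shift by blast
  have "d w (S w x) = d (S w (T w)) (S w x)" using S_T[OF Suc.prems] by simp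
  also have "\<dots> \<le> lam * d (T w) x" using S_contr[OF Suc.prems T_into[OF Suc.prems] x(1)] .
  also have "\<dots> \<le> lam ^ Suc n * d ((T ^^ Suc n) w) u"
    using mult_left_mono[OF x(3) lam] by (simp add: mult.assoc)
  finally show ?case
    using S_into[OF Suc.prems x(1)] T_S[OF Suc.prems x(1)] x(2) by (metis shift)
qed

text \<open>The standing assumptions on the coupled map.\<close>
locale coupled_map =
  fixes \<theta> \<eta> C :: real and \<tau> :: "real \<Rightarrow> real" and b :: nat
    and \<zeta> :: "nat \<Rightarrow> real \<Rightarrow> real" and E :: "(int \<Rightarrow> real) \<Rightarrow> (int \<Rightarrow> real)"
  assumes theta: "0 \<le> \<theta>" "\<theta> \<le> 1"
    and branches: "full_branches \<tau> b \<zeta>"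
    and branch_contr: "\<And>j s t. j < b \<Longrightarrow> s \<in> Iset \<Longrightarrow> t \<in> Iset \<Longrightarrow>
                         \<bar>\<zeta> j s - \<zeta> j t\<bar> \<le> \<eta> * \<bar>s - t\<bar>"
    and E_bij: "bij_betw E Omega Omega"
    and E_inv_lip: "\<And>x y. x \<in> Omega \<Longrightarrow> y \<in> Omega \<Longrightarrow>
                      dOm \<theta> (inv_into Omega E x) (inv_into Omega E y) \<le> C * dOm \<theta> x y"
    and rates: "0 \<le> \<eta>" "0 \<le> C" "\<eta> * C < 1"
begin

definition T :: "(int \<Rightarrow> real) \<Rightarrow> (int \<Rightarrow> real)" where
  "T = E \<circ> taubar \<tau>"

definition Einv :: "(int \<Rightarrow> real) \<Rightarrow> (int \<Rightarrow> real)" where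
  "Einv = inv_into Omega E"

definition branch :: "(int \<Rightarrow> real) \<Rightarrow> int \<Rightarrow> nat" where
  "branch w i = (SOME j. j < b \<and> \<zeta> j (\<tau> (w i)) = w i)"

definition local_inverse :: "(int \<Rightarrow> real) \<Rightarrow> (int \<Rightarrow> real) \<Rightarrow> (int \<Rightarrow> real)" where
  "local_inverse w z = (\<lambda>i. \<zeta> (branch w i) (Einv z i))"

lemma tau_into: "s \<in> Iset \<Longrightarrow> \<tau> s \<in> Iset"
  using branches by (auto simp: full_branches_def)

lemma zeta_inverse: "j < b \<Longrightarrow> t \<in> Iset \<Longrightarrow> \<zeta> j t \<in> Iset \<and> \<tau> (\<zeta> j t) = t"
  using branches by (auto simp: full_branches_def)

lemma E_into: "w \<in> Omega \<Longrightarrow> E w \<in> Omega"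
  using E_bij by (auto simp: bij_betw_def)

lemma Einv_into: "z \<in> Omega \<Longrightarrow> Einv z \<in> Omega"
  using E_bij unfolding Einv_def bij_betw_def by (auto intro: inv_into_into)

lemma E_Einv: "z \<in> Omega \<Longrightarrow> E (Einv z) = z"
  using E_bij unfolding Einv_def bij_betw_def by (metis f_inv_into_f)

lemma Einv_E: "w \<in> Omega \<Longrightarrow> Einv (E w) = w"
  using E_bij unfolding Einv_def bij_betw_def by (auto intro: inv_into_f_f)

lemma taubar_into: "w \<in> Omega \<Longrightarrow> taubar \<tau> w \<in> Omega"
  using tau_into by (auto simp: Omega_def taubar_def)

lemma T_into: "w \<in> Omega \<Longrightarrow> T w \<in> Omega"
  by (simp add: T_def E_into taubar_into)

text \<open>Since the branches exhaust the preimage of tau(w_i), one of them passes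
  through w_i.\<close>
lemma branch: "w \<in> Omega \<Longrightarrow> branch w i < b \<and> \<zeta> (branch w i) (\<tau> (w i)) = w i"
proof -
  assume "w \<in> Omega"
  then have wi: "w i \<in> Iset" by (simp add: Omega_def)
  then have "w i \<in> {s\<in>Iset. \<tau> s = \<tau> (w i)}" by simp
  also have "\<dots> = (\<lambda>j. \<zeta> j (\<tau> (w i))) ` {..<b}"
    using branches tau_into[OF wi] by (simp add: full_branches_def)
  finally have "\<exists>j. j < b \<and> \<zeta> j (\<tau> (w i)) = w i" by auto
  then show ?thesis unfolding branch_def by (rule someI_ex)
qed

lemma local_inverse_coord:
  assumes "w \<in> Omega" "z \<in> Omega"
  shows "local_inverse w z i \<in> Iset" "\<tau> (local_inverse w z i) = Einv z i"
  using zeta_inverse[OF conjunct1[OF branch[OF assms(1)]], of "Einv z i"]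
    Einv_into[OF assms(2)] by (auto simp: local_inverse_def Omega_def)

lemma local_inverse_into: "w \<in> Omega \<Longrightarrow> z \<in> Omega \<Longrightarrow> local_inverse w z \<in> Omega"
  using local_inverse_coord(1) by (simp add: Omega_def)

lemma T_local_inverse: "w \<in> Omega \<Longrightarrow> z \<in> Omega \<Longrightarrow> T (local_inverse w z) = z"
  using local_inverse_coord(2) E_Einv by (simp add: T_def taubar_def)

lemma local_inverse_T: "w \<in> Omega \<Longrightarrow> local_inverse w (T w) = w"
  using Einv_E[OF taubar_into] branch by (simp add: T_def local_inverse_def taubar_def)

text \<open>Each local inverse contracts by eta * C_E: the branches contract by eta
  coordinatewise and E^-1 expands by at most C_E.\<close>
lemma local_inverse_contraction:
  assumes w: "w \<in> Omega" and z: "z \<in> Omega" "z' \<in> Omega"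
  shows "dOm \<theta> (local_inverse w z) (local_inverse w z') \<le> (\<eta> * C) * dOm \<theta> z z'"
proof -
  have "dOm \<theta> (local_inverse w z) (local_inverse w z') \<le> \<eta> * dOm \<theta> (Einv z) (Einv z')"
  proof (rule dOm_coordinatewise_lipschitz[OF Einv_into[OF z(1)] Einv_into[OF z(2)] theta rates(1)])
    fix k
    show "\<bar>local_inverse w z k - local_inverse w z' k\<bar> \<le> \<eta> * \<bar>Einv z k - Einv z' k\<bar>"
      unfolding local_inverse_def using branch_contr branch[OF w] Einv_into z
      by (auto simp: Omega_def)
  qed
  also have "\<dots> \<le> \<eta> * (C * dOm \<theta> z z')"
    using E_inv_lip[OF z] rates by (intro mult_left_mono) (auto simp: Einv_def)
  finally show ?thesis by (simp add: mult.assoc)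
qed

text \<open>Every point of Omega has T^n-preimages within (eta * C_E)^n of any given
  point: the backward-orbit lemma together with the diameter bound.\<close>
lemma close_preimage:
  assumes u: "u \<in> Omega" and w: "w \<in> Omega"
  shows "\<exists>x\<in>Omega. (T ^^ n) x = u \<and> dOm \<theta> w x \<le> (\<eta> * C) ^ n"
proof -
  have lam: "0 \<le> \<eta> * C" using rates by simp
  obtain x where x: "x \<in> Omega" "(T ^^ n) x = u"
    and close: "dOm \<theta> w x \<le> (\<eta> * C) ^ n * dOm \<theta> ((T ^^ n) w) u"
    using backward_orbit[of Omega T local_inverse "dOm \<theta>" "\<eta> * C" u w n]
      T_into local_inverse_into T_local_inverse local_inverse_T local_inverse_contraction
      lam u w by blast
  have "(T ^^ n) w \<in> Omega" using w by (induction n) (auto intro: T_into)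
  then have "dOm \<theta> ((T ^^ n) w) u \<le> 1" using dOm_le_1 u theta by blast
  then have "dOm \<theta> w x \<le> (\<eta> * C) ^ n"
    using close mult_left_mono[of _ 1 "(\<eta> * C) ^ n"] lam by fastforce
  then show ?thesis using x by blast
qed

lemma topologically_mixing:
  assumes U: "U \<subseteq> Omega" "U \<noteq> {}" and V: "openOm \<theta> V" "V \<noteq> {}"
  shows "\<exists>N::nat. 0 < N \<and> (\<forall>n\<ge>N. U \<inter> (T ^^ n) ` V \<noteq> {})"
proof -
  obtain u v where u: "u \<in> U" and v: "v \<in> V" using U V by blast
  obtain e where e: "e > 0" and ball: "\<And>y. y \<in> Omega \<Longrightarrow> dOm \<theta> v y < e \<Longrightarrow> y \<in> V"
    using V v unfolding openOm_def by blast
  have lam: "0 \<le> \<eta> * C" "\<eta> * C < 1" using rates by auto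
  obtain N where N: "(\<eta> * C) ^ N < e"
    using e lam by (metis power_0 real_arch_pow_inv zero_less_one zero_power)
  have "U \<inter> (T ^^ n) ` V \<noteq> {}" if n: "Suc N \<le> n" for n
  proof -
    obtain x where x: "x \<in> Omega" "(T ^^ n) x = u" "dOm \<theta> v x \<le> (\<eta> * C) ^ n"
      using close_preimage u v U V by (meson openOm_def subsetD)
    have "(\<eta> * C) ^ n \<le> (\<eta> * C) ^ N" using n lam by (simp add: power_decreasing)
    then have "x \<in> V" using ball x N by fastforce
    then show ?thesis using u x(2) by blast
  qed
  then show ?thesis by (intro exI[of _ "Suc N"]) auto
qed

end

theorem mainTheorem12:
  fixes \<theta> \<eta> C\<^sub>E :: real and \<tau> :: "real \<Rightarrow> real" and b :: nat
    and \<zeta> :: "nat \<Rightarrow> real \<Rightarrow> real"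
    and E :: "(int \<Rightarrow> real) \<Rightarrow> (int \<Rightarrow> real)"
    and U V :: "(int \<Rightarrow> real) set"
  assumes theta: "0 < \<theta>" "\<theta> < 1"
    and branches: "full_branches \<tau> b \<zeta>"
    and eta: "0 < \<eta>" "\<eta> < 1"
    and contr: "\<And>j s t. j < b \<Longrightarrow> s \<in> Iset \<Longrightarrow> t \<in> Iset \<Longrightarrow>
                  \<bar>\<zeta> j s - \<zeta> j t\<bar> \<le> \<eta> * \<bar>s - t\<bar>"
    and E_bij: "bij_betw E Omega Omega"
    and CE: "0 < C\<^sub>E" "C\<^sub>E < 1 / \<eta>"
    and E_lip: "\<And>n x y. x \<in> Omega \<Longrightarrow> y \<in> Omega \<Longrightarrow>
                  dOm \<theta> (shiftn n (inv_into Omega E x)) (shiftn n (inv_into Omega E y))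
                    \<le> C\<^sub>E * dOm \<theta> (shiftn n x) (shiftn n y)"
    and U: "openOm \<theta> U" "U \<noteq> {}"
    and V: "openOm \<theta> V" "V \<noteq> {}"
  shows "\<exists>N::nat. 0 < N \<and> (\<forall>n\<ge>N. U \<inter> ((E \<circ> taubar \<tau>) ^^ n) ` V \<noteq> {})"
proof -
  have shift_0: "shiftn 0 x = x" for x by (simp add: shiftn_def)
  have rate: "\<eta> * C\<^sub>E < 1" using eta CE by (simp add: field_simps)
  interpret coupled_map \<theta> \<eta> C\<^sub>E \<tau> b \<zeta> E
    using theta branches contr E_bij E_lip[of _ _ 0] eta CE rate
    by unfold_locales (auto simp: shift_0)
  have "U \<subseteq> Omega" using U by (simp add: openOm_def)
  from topologically_mixing[OF this U(2) V] show ?thesis by (simp add: T_def)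
qed

end
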